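(* Let $X$ be a finite-dimensional real Hilbert space and $A,B$ nonempty closed convex subsets of $X$ with $\operatorname{ri}A\cap\operatorname{ri}B\neq\varnothing$. Let $T=P_BR_A+\mathrm{Id}-P_A$. Then $T$ is boundedly linearly regular: for every $\rho>0$ there exists $\kappa\ge0$ such that $d_{\operatorname{Fix}T}(x)\le\kappa\|x-Tx\|$ for all $x\in X$ with $\|x\|\le\rho$.
   Context: $P_C$ denotes the metric projection onto a closed convex set $C$, $R_C=2P_C-\mathrm{Id}$ the reflector, $d_C$ the distance to $C$, $\operatorname{ri}$ the relative interior, and $\operatorname{Fix}T$ the fixed point set of $T$. *)

theory Defs
  imports "HOL-Analysis.Analysis"
begin

abbreviation proj :: "'a::euclidean_space set \<Rightarrow> 'a \<Rightarrow> 'a" where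
  "proj C \<equiv> closest_point C"

definition refl :: "'a::euclidean_space set \<Rightarrow> 'a \<Rightarrow> 'a" where
  "refl C x = 2 *\<^sub>R proj C x - x"

definition DR_op :: "'a::euclidean_space set \<Rightarrow> 'a set \<Rightarrow> 'a \<Rightarrow> 'a" where
  "DR_op A B x = proj B (refl A x) + x - proj A x"

definition fixpoints :: "('a \<Rightarrow> 'a) \<Rightarrow> 'a set" where
  "fixpoints T = {x. T x = x}"

end

theory Submission imports Defs begin

(* Fix z0 in ri A \<inter> ri B.  Near z0 the sets A and B contain balls of the subspaces
   L, M parallel to their affine hulls (rel_interior_parallel_ball), and every vector
   of V = span (L \<union> M) splits as l - m with l \<in> L, m \<in> M and norms at most K times
   its norm (bounded_splitting, obtained from a linear map g on V with g v \<in> L and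
   g v - v \<in> M).  For a point x put a = P_A x and b = P_B (R_A x); then x - T x = a - b
   and the projection inequalities hold at a and b (DR_step_facts).  Write
   x - a = y + w with y \<in> V, w \<perp> V.  Testing the projection inequalities at points of
   the two balls gives two estimates, each linear in |a - b|:
     (1) the V-component y of x - a is small            (normal_component_bound),
     (2) a is close to a point c of A \<inter> B                (near_intersection_point).
   Since c + w is a fixed point of T for every w \<perp> V   (DR_fixpoint_offset), the
   distance from x to Fix T is at most |a - c| + |y|     (DR_error_bound_at).  The
   theorem follows by bounding |x - z0| on the ball of radius \<rho>. *)

definition bounded_splitting :: "'a::real_normed_vector set \<Rightarrow> 'a set \<Rightarrow> real \<Rightarrow> bool" where
  "bounded_splitting L M K \<longleftrightarrow>
     (\<forall>v\<in>span (L \<union> M). \<exists>l\<in>L. \<exists>m\<in>M. v = l - m \<and> norm l \<le> K * norm v \<and> norm m \<le> K * norm v)"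

(* A linear choice of the L-part on span (L \<union> M): defined on a basis and extended
   linearly; linearity keeps both parts inside the subspaces. *)
lemma linear_splitting_map:
  fixes L M :: "'a::euclidean_space set"
  assumes L: "subspace L" and M: "subspace M"
  obtains g where "linear g" "\<And>v. v \<in> span (L \<union> M) \<Longrightarrow> g v \<in> L \<and> g v - v \<in> M"
proof -
  obtain Bs where Bs: "Bs \<subseteq> span (L \<union> M)" "independent Bs" "span (L \<union> M) \<subseteq> span Bs"
    by (metis basis_exists)
  define f where "f b = (SOME l. l \<in> L \<and> l - b \<in> M)" for b
  have f: "f b \<in> L \<and> f b - b \<in> M" if b: "b \<in> span (L \<union> M)" for b
  proof -
    have span_LM: "span L = L" "span M = M" using L M by (simp_all add: span_eq_iff)
    obtain p q where pq: "p \<in> L" "q \<in> M" "b = p + q"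
      using b unfolding span_Un span_LM by blast
    then have "p \<in> L \<and> p - b \<in> M" using M by (simp add: subspace_neg)
    then show ?thesis unfolding f_def by (rule someI)
  qed
  obtain g where g: "linear g" "\<And>b. b \<in> Bs \<Longrightarrow> g b = f b"
    using linear_independent_extend[OF Bs(2), of f] by blast
  have h: "linear (\<lambda>v. g v - v)"
    using g(1) by (simp add: linear_compose_sub linear_id[unfolded id_def])
  have "g v \<in> L" if "v \<in> span (L \<union> M)" for v
  proof -
    have "g ` Bs \<subseteq> L" using g(2) f Bs(1) by auto
    then have "span (g ` Bs) \<subseteq> L" using L by (simp add: span_minimal)
    then show ?thesis using that Bs(3) span_linear_image[OF g(1), of Bs] by auto
  qed
  moreover have "g v - v \<in> M" if "v \<in> span (L \<union> M)" for v
  proof -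
    have "(\<lambda>v. g v - v) ` Bs \<subseteq> M" using g(2) f Bs(1) by auto
    then have "span ((\<lambda>v. g v - v) ` Bs) \<subseteq> M" using M by (simp add: span_minimal)
    then show ?thesis using that Bs(3) span_linear_image[OF h, of Bs] by auto
  qed
  ultimately show ?thesis using g(1) that by blast
qed

(* Any two subspaces of a finite-dimensional space admit a bounded splitting:
   the linear splitting map is bounded. *)
lemma subspaces_bounded_splitting:
  fixes L M :: "'a::euclidean_space set"
  assumes "subspace L" "subspace M"
  obtains K where "K > 0" "bounded_splitting L M K"
proof -
  obtain g where g: "linear g" "\<And>v. v \<in> span (L \<union> M) \<Longrightarrow> g v \<in> L \<and> g v - v \<in> M"
    using linear_splitting_map[OF assms] by blast
  obtain C where C: "\<And>v. norm (g v) \<le> C * norm v" using linear_bounded[OF g(1)] by blast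
  define K where "K = \<bar>C\<bar> + 1"
  have gK: "norm (g v) \<le> K * norm v" for v
    using C[of v] abs_ge_self[of C] mult_right_mono[of C "K" "norm v"] by (simp add: K_def)
  have mK: "norm (g v - v) \<le> K * norm v" for v
  proof -
    have "norm (g v - v) \<le> norm (g v) + norm v" by (rule norm_triangle_ineq4)
    also have "\<dots> \<le> (\<bar>C\<bar> + 1) * norm v"
      using C[of v] abs_ge_self[of C] mult_right_mono[of C "\<bar>C\<bar>" "norm v"] by (simp add: distrib_right)
    finally show ?thesis by (simp add: K_def)
  qed
  have "\<exists>l\<in>L. \<exists>m\<in>M. v = l - m \<and> norm l \<le> K * norm v \<and> norm m \<le> K * norm v"
    if "v \<in> span (L \<union> M)" for v
    using g(2)[OF that] gK[of v] mK[of v] by (intro bexI[of _ "g v"] bexI[of _ "g v - v"]) auto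
  then have "bounded_splitting L M K" unfolding bounded_splitting_def by blast
  moreover have "K > 0" by (simp add: K_def add_nonneg_pos)
  ultimately show ?thesis using that by blast
qed

lemma rel_interior_parallel_ball:
  fixes A :: "'a::euclidean_space set"
  assumes "z \<in> rel_interior A"
  obtains L r where "subspace L" "r > 0" "\<And>a. a \<in> A \<Longrightarrow> a - z \<in> L"
    "\<And>l. l \<in> L \<Longrightarrow> norm l \<le> r \<Longrightarrow> z + l \<in> A"
proof -
  obtain r where zA: "z \<in> A" and r: "r > 0" "cball z r \<inter> affine hull A \<subseteq> A"
    using assms mem_rel_interior_cball by blast
  define L where "L = affine hull ((\<lambda>x. -z + x) ` A)"
  have "subspace L" unfolding L_def subspace_affine using zA by (auto intro!: hull_inc)
  moreover have "a - z \<in> L" if "a \<in> A" for a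
    unfolding L_def using that by (intro hull_inc) (auto simp: image_iff)
  moreover have "z + l \<in> A" if "l \<in> L" "norm l \<le> r" for l
  proof -
    have "z + l \<in> affine hull A"
      using that(1) unfolding L_def affine_hull_translation by auto
    moreover have "z + l \<in> cball z r" using that(2) by (simp add: dist_norm)
    ultimately show ?thesis using r(2) by blast
  qed
  ultimately show ?thesis using r(1) that by blast
qed

lemma closest_point_orthogonal_offset:
  fixes S :: "'a::euclidean_space set"
  assumes "closed S" "convex S" "c \<in> S" "\<And>z. z \<in> S \<Longrightarrow> inner w (z - c) = 0"
  shows "closest_point S (c + w) = c"
proof -
  have "dist (c + w) c \<le> dist (c + w) z" if z: "z \<in> S" for z
  proof -
    have "inner (c - z) w = 0"
      using assms(4)[OF z] by (metis inner_commute inner_minus_left minus_diff_eq neg_equal_0_iff_equal)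
    then have "(norm w)\<^sup>2 \<le> (norm ((c - z) + w))\<^sup>2"
      using norm_add_Pythagorean[of "c - z" w] by (simp add: orthogonal_def)
    then have "norm w \<le> norm ((c - z) + w)" by (rule power2_le_imp_le) simp
    then show ?thesis by (simp add: dist_norm algebra_simps)
  qed
  then show ?thesis using closest_point_unique[OF assms(2,1,3)] by auto
qed

(* Points of A \<inter> B shifted orthogonally to both sets are fixed by T:
   P_A (c + w) = c, R_A (c + w) = c - w and P_B (c - w) = c. *)
lemma DR_fixpoint_offset:
  fixes A B :: "'a::euclidean_space set"
  assumes "closed A" "convex A" "closed B" "convex B" "c \<in> A" "c \<in> B"
    and "\<And>z. z \<in> A \<Longrightarrow> inner w (z - c) = 0" "\<And>z. z \<in> B \<Longrightarrow> inner w (z - c) = 0"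
  shows "c + w \<in> fixpoints (DR_op A B)"
proof -
  have pA: "proj A (c + w) = c"
    using closest_point_orthogonal_offset[OF assms(1,2,5)] assms(7) by blast
  have pB: "proj B (c - w) = c"
    using closest_point_orthogonal_offset[OF assms(3,4,6), of "- w"] assms(8) by simp
  have "refl A (c + w) = c - w" by (simp add: refl_def pA scaleR_2 algebra_simps)
  then show ?thesis by (simp add: fixpoints_def DR_op_def pA pB)
qed

(* Rescaling a nonzero vector of span (L \<union> M) to norm r / K yields parts of norm \<le> r;
   this is how the balls of radius r around z0 are reached. *)
lemma bounded_splitting_rescaled:
  assumes split: "bounded_splitting L M K" and K: "K > 0" and r: "r > 0"
    and v: "v \<in> span (L \<union> M)" "v \<noteq> 0"
  obtains l m where "l \<in> L" "m \<in> M" "(r / (K * norm v)) *\<^sub>R v = l - m" "norm l \<le> r" "norm m \<le> r"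
proof -
  have "(r / (K * norm v)) *\<^sub>R v \<in> span (L \<union> M)" using v(1) by (rule span_scale)
  moreover have "K * norm ((r / (K * norm v)) *\<^sub>R v) = r" using K r v(2) by simp
  ultimately show ?thesis using split that unfolding bounded_splitting_def by metis
qed

(* Let a, b be points where u, respectively a - b - u, are normal
   to A, respectively B (as for a = P_A x, b = P_B (R_A x), u = x - a).  Testing the
   normal-cone inequalities at z0 + l \<in> A and z0 + m \<in> B, where l - m rescales y,
   bounds the span (L \<union> M)-component y of u linearly by |a - b|. *)
lemma normal_component_bound:
  fixes A B :: "'a::euclidean_space set"
  assumes split: "bounded_splitting L M K" and K: "K > 0" and r: "r > 0"
    and ballA: "\<And>l. l \<in> L \<Longrightarrow> norm l \<le> r \<Longrightarrow> z0 + l \<in> A"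
    and ballB: "\<And>m. m \<in> M \<Longrightarrow> norm m \<le> r \<Longrightarrow> z0 + m \<in> B"
    and normalA: "\<And>z. z \<in> A \<Longrightarrow> inner u (z - a) \<le> 0"
    and normalB: "\<And>z. z \<in> B \<Longrightarrow> inner (a - b - u) (z - b) \<le> 0"
    and y: "y \<in> span (L \<union> M)" "inner u y = (norm y)\<^sup>2"
  shows "norm y \<le> K * (norm u + norm (b - z0) + r) / r * norm (a - b)"
proof (cases "y = 0")
  case True
  then show ?thesis using K r by simp
next
  case False
  define e where "e = a - b"
  define t where "t = r / (K * norm y)"
  obtain l m where lm: "l \<in> L" "m \<in> M" "t *\<^sub>R y = l - m" "norm l \<le> r" "norm m \<le> r"
    using bounded_splitting_rescaled[OF split K r y(1) False] unfolding t_def by blast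
  have tA: "inner u l \<le> inner u (a - z0)"
    using normalA[OF ballA[OF lm(1,4)]] by (simp add: inner_diff_right inner_add_right)
  have tB: "inner (e - u) m \<le> inner (e - u) (b - z0)"
    using normalB[OF ballB[OF lm(2,5)]] by (simp add: e_def inner_diff_right inner_add_right)
  have "r * norm y / K = t * (norm y)\<^sup>2"
    using K False by (simp add: t_def power2_eq_square)
  also have "\<dots> = inner u (t *\<^sub>R y)" using y(2) by simp
  also have "\<dots> = inner u l + inner (e - u) m - inner e m"
    by (simp add: lm(3) inner_diff_right inner_diff_left)
  also have "\<dots> \<le> inner u (a - z0) + inner (e - u) (b - z0) - inner e m"
    using tA tB by linarith
  also have "\<dots> = inner u e + inner e (b - z0) + inner e (- m)"
    by (simp add: e_def inner_diff_left inner_diff_right)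
  also have "\<dots> \<le> norm u * norm e + norm e * norm (b - z0) + norm e * norm m"
    using norm_cauchy_schwarz[of u e] norm_cauchy_schwarz[of e "b - z0"]
      norm_cauchy_schwarz[of e "- m"] by simp
  also have "\<dots> \<le> norm e * (norm u + norm (b - z0) + r)"
    using mult_left_mono[OF lm(5), of "norm e"] by (simp add: algebra_simps)
  finally have "r * norm y \<le> K * (norm e * (norm u + norm (b - z0) + r))"
    using K by (simp add: divide_le_eq mult.commute)
  then show ?thesis using r by (simp add: e_def pos_le_divide_eq mult.commute mult.left_commute)
qed

(* The point c is a convex
   combination of a with z0 + l \<in> A and, simultaneously, of b with z0 + m \<in> B. *)
lemma near_intersection_point:
  fixes A B :: "'a::euclidean_space set"
  assumes "convex A" "convex B"
    and split: "bounded_splitting L M K" and K: "K > 0" and r: "r > 0"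
    and ballA: "\<And>l. l \<in> L \<Longrightarrow> norm l \<le> r \<Longrightarrow> z0 + l \<in> A"
    and ballB: "\<And>m. m \<in> M \<Longrightarrow> norm m \<le> r \<Longrightarrow> z0 + m \<in> B"
    and ab: "a \<in> A" "b \<in> B" "a - b \<in> span (L \<union> M)"
  obtains c where "c \<in> A" "c \<in> B" "norm (a - c) \<le> K * (norm (a - z0) + r) / r * norm (a - b)"
proof (cases "a = b")
  case True
  then show ?thesis using that[of a] ab by simp
next
  case False
  define \<mu> where "\<mu> = r / (K * norm (b - a))"
  have "b - a \<in> span (L \<union> M)" "b - a \<noteq> 0" using ab(3) False span_neg by fastforce+
  then obtain l m where lm: "l \<in> L" "m \<in> M" "\<mu> *\<^sub>R (b - a) = l - m" "norm l \<le> r" "norm m \<le> r"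
    using bounded_splitting_rescaled[OF split K r] unfolding \<mu>_def by blast
  have mu: "\<mu> > 0" using K r False by (simp add: \<mu>_def)
  define lam where "lam = 1 / (1 + \<mu>)"
  have lam: "0 \<le> lam" "lam \<le> 1" "lam * \<mu> = 1 - lam" using mu by (simp_all add: lam_def field_simps)
  have lam_le: "lam \<le> K * norm (a - b) / r"
  proof -
    have "lam \<le> 1 / \<mu>" unfolding lam_def using mu by (simp add: frac_le)
    also have "\<dots> = K * norm (a - b) / r" using K r False by (simp add: \<mu>_def norm_minus_commute)
    finally show ?thesis .
  qed
  define c where "c = (1 - lam) *\<^sub>R a + lam *\<^sub>R (z0 + l)"
  have "c \<in> A" unfolding c_def using convexD[OF assms(1) ab(1) ballA[OF lm(1,4)]] lam by simp
  moreover have "c = (1 - lam) *\<^sub>R b + lam *\<^sub>R (z0 + m)"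
  proof -
    have "(1 - lam) *\<^sub>R (b - a) = lam *\<^sub>R (\<mu> *\<^sub>R (b - a))" by (simp add: lam(3)[symmetric])
    also have "\<dots> = lam *\<^sub>R (l - m)" by (simp only: lm(3))
    finally have "(1 - lam) *\<^sub>R (b - a) = lam *\<^sub>R (l - m)" .
    then show ?thesis by (simp add: c_def algebra_simps)
  qed
  then have "c \<in> B" using convexD[OF assms(2) ab(2) ballB[OF lm(2,5)]] lam by simp
  moreover have "norm (a - c) \<le> K * (norm (a - z0) + r) / r * norm (a - b)"
  proof -
    have "a - c = lam *\<^sub>R ((a - z0) - l)" by (simp add: c_def algebra_simps)
    then have "norm (a - c) \<le> lam * (norm (a - z0) + r)"
      using norm_triangle_ineq4[of "a - z0" l] lm(4) lam(1) by (simp add: mult_left_mono)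
    also have "\<dots> \<le> K * norm (a - b) / r * (norm (a - z0) + r)"
      using mult_right_mono[OF lam_le, of "norm (a - z0) + r"] r by simp
    finally show ?thesis by (simp add: field_simps)
  qed
  ultimately show ?thesis using that by blast
qed

(* One Douglas-Rachford step from x, with a = P_A x and b = P_B (R_A x): the residual
   x - T x is a - b; x - a is normal to A at a and R_A x - b = a - b - (x - a) is normal
   to B at b; and a, b stay within a fixed multiple of |x - z| of any z \<in> A \<inter> B
   (the projections are nonexpansive and fix z). *)
lemma DR_step_facts:
  fixes A B :: "'a::euclidean_space set" and x :: 'a
  assumes A: "closed A" "convex A" and B: "closed B" "convex B" and z: "z \<in> A" "z \<in> B"
  defines "a \<equiv> proj A x" and "b \<equiv> proj B (refl A x)"
  shows "a \<in> A" "b \<in> B" "x - DR_op A B x = a - b"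
    and "\<And>p. p \<in> A \<Longrightarrow> inner (x - a) (p - a) \<le> 0"
    and "\<And>q. q \<in> B \<Longrightarrow> inner (a - b - (x - a)) (q - b) \<le> 0"
    and "norm (x - a) \<le> norm (x - z)" "norm (a - z) \<le> norm (x - z)"
    and "norm (b - z) \<le> 3 * norm (x - z)"
proof -
  have reflx: "refl A x = a + a - x" by (simp add: refl_def a_def scaleR_2)
  show "a \<in> A" unfolding a_def using A(1) z(1) closest_point_in_set by blast
  show "b \<in> B" unfolding b_def using B(1) z(2) closest_point_in_set by blast
  show "x - DR_op A B x = a - b" by (simp add: DR_op_def a_def b_def)
  show "inner (x - a) (p - a) \<le> 0" if "p \<in> A" for p
    unfolding a_def by (rule closest_point_dot[OF A(2,1) that])
  show "inner (a - b - (x - a)) (q - b) \<le> 0" if "q \<in> B" for q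
  proof -
    have refl_b: "refl A x - b = a - b - (x - a)" by (simp add: reflx)
    have "inner (refl A x - b) (q - b) \<le> 0"
      unfolding b_def by (rule closest_point_dot[OF B(2,1) that])
    then show ?thesis unfolding refl_b .
  qed
  show "norm (x - a) \<le> norm (x - z)"
    using closest_point_le[OF A(1) z(1), of x] by (simp add: a_def dist_norm)
  show a_z: "norm (a - z) \<le> norm (x - z)"
    using closest_point_lipschitz[OF A(2,1), of x z] z(1)
    by (auto simp: a_def dist_norm closest_point_self)
  have "norm (b - z) \<le> norm (refl A x - z)"
    using closest_point_lipschitz[OF B(2,1), of "refl A x" z] z(2)
    by (auto simp: b_def dist_norm closest_point_self)
  also have "refl A x - z = (a - z) + (a - z) - (x - z)" by (simp add: reflx)
  also have "norm \<dots> \<le> norm (a - z) + norm (a - z) + norm (x - z)"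
    using norm_triangle_ineq4[of "(a - z) + (a - z)" "x - z"] norm_triangle_ineq[of "a - z" "a - z"]
    by linarith
  finally show "norm (b - z) \<le> 3 * norm (x - z)" using a_z by simp
qed

(* Writing a = P_A x, b = P_B (R_A x) and x - a = y + w (y \<in> span (L \<union> M), w \<perp> it),
   the fixed point c + w with c \<in> A \<inter> B from estimate (2) lies within
   |a - c| + |y| of x, and both terms are controlled by |a - b| = |x - T x|. *)
lemma DR_error_bound_at:
  fixes A B :: "'a::euclidean_space set"
  assumes A: "closed A" "convex A" and B: "closed B" "convex B"
    and z0: "z0 \<in> A" "z0 \<in> B"
    and split: "bounded_splitting L M K" and K: "K > 0" and r: "r > 0"
    and parA: "\<And>a. a \<in> A \<Longrightarrow> a - z0 \<in> L" and parB: "\<And>b. b \<in> B \<Longrightarrow> b - z0 \<in> M"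
    and ballA: "\<And>l. l \<in> L \<Longrightarrow> norm l \<le> r \<Longrightarrow> z0 + l \<in> A"
    and ballB: "\<And>m. m \<in> M \<Longrightarrow> norm m \<le> r \<Longrightarrow> z0 + m \<in> B"
  shows "infdist x (fixpoints (DR_op A B))
           \<le> K * (5 * norm (x - z0) + 2 * r) / r * norm (x - DR_op A B x)"
proof -
  define V where "V = span (L \<union> M)"
  have diff_V: "p - q \<in> V" if "p - z0 \<in> L \<union> M" "q - z0 \<in> L \<union> M" for p q
    using span_diff[OF span_base[OF that(1)] span_base[OF that(2)]] by (simp add: V_def)
  define D where "D = norm (x - z0)"
  define a where "a = proj A x"
  define b where "b = proj B (refl A x)"
  define u where "u = x - a"
  note step = DR_step_facts[OF A B z0, where x = x, folded a_def b_def, folded u_def D_def]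
  have ab_V: "a - b \<in> V" using diff_V parA[OF step(1)] parB[OF step(2)] by blast
  obtain y w where y: "y \<in> V" and w: "\<And>v. v \<in> V \<Longrightarrow> inner w v = 0" and uyw: "u = y + w"
    using orthogonal_subspace_decomp_exists[of "L \<union> M" u] unfolding V_def orthogonal_def by metis
  have "inner u y = (norm y)\<^sup>2" using w[OF y] by (simp add: uyw inner_add_left power2_norm_eq_inner)
  then have y_bound: "norm y \<le> K * (norm u + norm (b - z0) + r) / r * norm (a - b)"
    using normal_component_bound[OF split K r ballA ballB step(4,5)] y by (simp add: V_def)
  obtain c where cA: "c \<in> A" and cB: "c \<in> B"
    and c_bound: "norm (a - c) \<le> K * (norm (a - z0) + r) / r * norm (a - b)"
    using near_intersection_point[OF A(2) B(2) split K r ballA ballB step(1,2)] ab_V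
    unfolding V_def by blast
  have "c + w \<in> fixpoints (DR_op A B)"
    using DR_fixpoint_offset[OF A B cA cB] w diff_V parA parB cA cB by blast
  then have "infdist x (fixpoints (DR_op A B)) \<le> dist x (c + w)" by (rule infdist_le)
  also have "\<dots> = norm ((a - c) + y)"
  proof -
    have "x = a + y + w" using uyw by (simp add: u_def algebra_simps)
    then show ?thesis by (simp add: dist_norm algebra_simps)
  qed
  also have "\<dots> \<le> norm (a - c) + norm y" by (rule norm_triangle_ineq)
  also have "\<dots> \<le> K * (norm (a - z0) + r) / r * norm (a - b)
                 + K * (norm u + norm (b - z0) + r) / r * norm (a - b)"
    using c_bound y_bound by (rule add_mono)
  also have "\<dots> = K / r * norm (a - b) * (norm (a - z0) + norm u + norm (b - z0) + 2 * r)"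
    using r by (simp add: field_simps)
  also have "\<dots> \<le> K / r * norm (a - b) * (5 * D + 2 * r)"
    using K r step(6-8) by (intro mult_left_mono) auto
  finally show ?thesis by (simp add: step(3) D_def field_simps)
qed

theorem theorem4p5:
  fixes A B :: "'a::euclidean_space set"
  assumes "A \<noteq> {}" "closed A" "convex A"
      and "B \<noteq> {}" "closed B" "convex B"
      and "rel_interior A \<inter> rel_interior B \<noteq> {}"
  shows "\<forall>\<rho>>0. \<exists>\<kappa>\<ge>0. \<forall>x. norm x \<le> \<rho> \<longrightarrow>
           infdist x (fixpoints (DR_op A B)) \<le> \<kappa> * norm (x - DR_op A B x)"
proof -
  obtain z0 where z0A: "z0 \<in> rel_interior A" and z0B: "z0 \<in> rel_interior B" using assms(7) by blast
  obtain L rA where L: "subspace L" "rA > 0" "\<And>a. a \<in> A \<Longrightarrow> a - z0 \<in> L"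
      and ballA: "\<And>l. l \<in> L \<Longrightarrow> norm l \<le> rA \<Longrightarrow> z0 + l \<in> A"
    using rel_interior_parallel_ball[OF z0A] by blast
  obtain M rB where M: "subspace M" "rB > 0" "\<And>b. b \<in> B \<Longrightarrow> b - z0 \<in> M"
      and ballB: "\<And>m. m \<in> M \<Longrightarrow> norm m \<le> rB \<Longrightarrow> z0 + m \<in> B"
    using rel_interior_parallel_ball[OF z0B] by blast
  obtain K where K: "K > 0" "bounded_splitting L M K" using subspaces_bounded_splitting[OF L(1) M(1)] .
  define r where "r = min rA rB"
  have r: "r > 0" using L(2) M(2) by (simp add: r_def)
  have bound: "infdist x (fixpoints (DR_op A B)) \<le> K * (5 * norm (x - z0) + 2 * r) / r * norm (x - DR_op A B x)" for x
    by (rule DR_error_bound_at[OF assms(2,3,5,6) _ _ K(2,1) r L(3) M(3)])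
       (use z0A z0B rel_interior_subset ballA ballB in \<open>auto simp: r_def\<close>)
  show ?thesis
  proof (intro allI impI)
    fix \<rho> :: real assume "\<rho> > 0"
    define \<kappa> where "\<kappa> = K * (5 * (\<rho> + norm z0) + 2 * r) / r"
    have "K * (5 * norm (x - z0) + 2 * r) / r \<le> \<kappa>" if "norm x \<le> \<rho>" for x
      using that norm_triangle_ineq4[of x z0] K(1) r
      by (auto simp: \<kappa>_def intro!: divide_right_mono mult_left_mono)
    then have "norm x \<le> \<rho> \<Longrightarrow> infdist x (fixpoints (DR_op A B)) \<le> \<kappa> * norm (x - DR_op A B x)" for x
      using bound[of x] mult_right_mono[of _ \<kappa> "norm (x - DR_op A B x)"] by fastforce
    moreover have "\<kappa> \<ge> 0" using K(1) r \<open>\<rho> > 0\<close> by (simp add: \<kappa>_def)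
    ultimately show "\<exists>\<kappa>\<ge>0. \<forall>x. norm x \<le> \<rho> \<longrightarrow> infdist x (fixpoints (DR_op A B)) \<le> \<kappa> * norm (x - DR_op A B x)"
      by blast
  qed
qed

end
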